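(* (i) Let $I$ be any instance with $n$ agents and goods partitioned into categories $C_1,\dots,C_h$ with $m_j=|C_j|$ and cardinality constraints $\kappa=(k_1,\dots,k_h)$, $k_j\ge m_j/n$, ordered so that $\frac{k_1}{m_1}\le\dots\le\frac{k_h}{m_h}$, and with $k_1\le m_1$. Then $$\frac{\text{OPT-USW}(I)}{\max_{\mathcal{A}\in \mathcal{C}_\kappa(I)}\text{USW}(\mathcal{A})}\le\frac{m_1}{k_1}.$$ (ii) For all positive integers $n,k,q$ with $k\mid q$ and $q\le kn$, there is an instance with $n$ agents and $h=n$ categories, each with $m_j=q$ goods and constraint $k_j=k$, for which this ratio equals $\frac{q}{k}=\frac{m_1}{k_1}$.
   Context: Each agent $i$ has an additive utility function $u_i:2^M\to\mathbb{R}_{\ge 0}$ with $u_i(\emptyset)=0$ and $u_i(M)=1$, where $M=C_1\cup\dots\cup C_h$ is the set of goods. An allocation $(A_1,\dots,A_n)$ is a partition of $M$; it is cardinal if $|A_i\cap C_j|\le k_j$ for all $i,j$; $\mathcal{C}_\kappa(I)$ is the set of cardinal allocations. $\text{USW}(\mathcal{A})=\sum_i u_i(A_i)$ and $\text{OPT-USW}(I)$ is its maximum over all allocations. *)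

theory Defs
  imports Complex_Main
begin

text \<open>Agents are 0..n-1, categories are C 0, ..., C (h-1) (so the paper's C_1 is C 0),
goods form a finite set M of some type 'g. u i g is agent i's value for good g;
utilities are additive.\<close>

definition valid_instance ::
  "nat \<Rightarrow> nat \<Rightarrow> 'g set \<Rightarrow> (nat \<Rightarrow> 'g set) \<Rightarrow> (nat \<Rightarrow> 'g \<Rightarrow> real) \<Rightarrow> bool" where
  "valid_instance n h M C u \<longleftrightarrow>
     0 < n \<and> finite M \<and>
     (\<forall>j<h. C j \<noteq> {} \<and> C j \<subseteq> M) \<and>
     (\<forall>j<h. \<forall>j'<h. j \<noteq> j' \<longrightarrow> C j \<inter> C j' = {}) \<and>
     (\<Union>j<h. C j) = M \<and>
     (\<forall>i<n. (\<forall>g\<in>M. 0 \<le> u i g) \<and> (\<Sum>g\<in>M. u i g) = 1)"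

definition util :: "(nat \<Rightarrow> 'g \<Rightarrow> real) \<Rightarrow> nat \<Rightarrow> 'g set \<Rightarrow> real" where
  "util u i S = (\<Sum>g\<in>S. u i g)"

definition is_allocation :: "nat \<Rightarrow> 'g set \<Rightarrow> (nat \<Rightarrow> 'g set) \<Rightarrow> bool" where
  "is_allocation n M A \<longleftrightarrow>
     (\<forall>i<n. A i \<subseteq> M) \<and>
     (\<forall>i<n. \<forall>i'<n. i \<noteq> i' \<longrightarrow> A i \<inter> A i' = {}) \<and>
     (\<Union>i<n. A i) = M"

definition is_cardinal :: "nat \<Rightarrow> nat \<Rightarrow> (nat \<Rightarrow> 'g set) \<Rightarrow> (nat \<Rightarrow> nat) \<Rightarrow> (nat \<Rightarrow> 'g set) \<Rightarrow> bool" where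
  "is_cardinal n h C k A \<longleftrightarrow> (\<forall>i<n. \<forall>j<h. card (A i \<inter> C j) \<le> k j)"

definition usw :: "nat \<Rightarrow> (nat \<Rightarrow> 'g \<Rightarrow> real) \<Rightarrow> (nat \<Rightarrow> 'g set) \<Rightarrow> real" where
  "usw n u A = (\<Sum>i<n. util u i (A i))"

definition opt_usw :: "nat \<Rightarrow> 'g set \<Rightarrow> (nat \<Rightarrow> 'g \<Rightarrow> real) \<Rightarrow> real" where
  "opt_usw n M u = Sup {usw n u A | A. is_allocation n M A}"

definition max_cardinal_usw ::
  "nat \<Rightarrow> nat \<Rightarrow> 'g set \<Rightarrow> (nat \<Rightarrow> 'g set) \<Rightarrow> (nat \<Rightarrow> nat) \<Rightarrow> (nat \<Rightarrow> 'g \<Rightarrow> real) \<Rightarrow> real" where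
  "max_cardinal_usw n h M C k u =
     Sup {usw n u A | A. is_allocation n M A \<and> is_cardinal n h C k A}"

end

theory Submission
  imports Defs
begin

text \<open>Put \<open>r = k\<^sub>1 / m\<^sub>1\<close>; by the ordering of the categories, \<open>r m\<^sub>j \<le> k\<^sub>j\<close> for every \<open>j\<close>.
Given any allocation, let every agent keep, in each category, the \<open>k\<^sub>j\<close> most valuable goods of
her bundle there (all of them if there are fewer). Her bundle has at most \<open>m\<^sub>j\<close> goods, so by
averaging the kept goods carry at least the fraction \<open>r\<close> of its value. Because \<open>m\<^sub>j \<le> n k\<^sub>j\<close>,
the discarded goods can be handed out again without anybody exceeding \<open>k\<^sub>j\<close>. The result is a
cardinal allocation with at least \<open>r\<close> times the welfare, hence \<open>r \<cdot> OPT-USW \<le> max USW\<^sub>\<kappa>\<close>.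
For tightness, split \<open>{0..<nq}\<close> into \<open>n\<close> blocks of \<open>q\<close> goods and let agent \<open>i\<close> value only
block \<open>i\<close>, uniformly. Handing out the blocks yields welfare \<open>n\<close>, while in a cardinal allocation
each agent gets at most \<open>k\<close> goods of her block, so the welfare is at most \<open>n k / q\<close>.\<close>

lemma ex_heavy_subset:
  fixes f :: "'a \<Rightarrow> real"
  assumes "finite S" "\<And>x. x \<in> S \<Longrightarrow> 0 \<le> f x" "t \<le> card S"
  shows "\<exists>T\<subseteq>S. card T = t \<and> real t * sum f S \<le> real (card S) * sum f T"
  using assms
proof (induction "card S - t" arbitrary: S)
  case 0
  then have "card S = t" by simp
  then show ?case by blast
next
  case (Suc d)
  \<comment> \<open>Dropping a lightest element does not decrease the average weight.\<close>
  define x where "x = arg_min_on f S"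
  have "S \<noteq> {}" using Suc.hyps by auto
  then have x: "x \<in> S" and x_min: "\<And>y. y \<in> S \<Longrightarrow> f x \<le> f y"
    using arg_min_if_finite(1)[OF Suc.prems(1)] arg_min_least[OF Suc.prems(1)]
    unfolding x_def by auto
  define S' where "S' = S - {x}"
  have card_S: "card S = card S' + 1" and "finite S'"
    using card_Suc_Diff1[OF Suc.prems(1) x] Suc.prems(1) unfolding S'_def by auto
  moreover have "d = card S' - t" and t_le: "t \<le> card S'"
    using Suc.hyps(2) Suc.prems(3) card_S by auto
  moreover have "\<And>y. y \<in> S' \<Longrightarrow> 0 \<le> f y"
    using Suc.prems(2) unfolding S'_def by blast
  ultimately obtain T where T: "T \<subseteq> S'" "card T = t"
    and IH: "real t * sum f S' \<le> real (card S') * sum f T"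
    using Suc.hyps(1) by blast
  have sum_S: "sum f S = sum f S' + f x"
    using Suc.prems(1) x unfolding S'_def by (simp add: sum.remove)
  have "real (card S') * f x \<le> sum f S'"
    using sum_bounded_below[of S' "f x" f] x_min unfolding S'_def by auto
  then have "real t * (real (card S') * f x) \<le> real (card S') * sum f T"
    using IH by (meson mult_left_mono of_nat_0_le_iff order_trans)
  moreover have "0 \<le> sum f T"
    using T(1) Suc.prems(2) unfolding S'_def by (meson DiffD1 subsetD sum_nonneg)
  ultimately have "real t * f x \<le> sum f T"
    using t_le by (cases "t = 0") (auto simp: mult.left_commute)
  then have "real t * sum f S \<le> real (card S) * sum f T"
    using IH sum_S card_S by (simp add: algebra_simps)
  then show ?case using T unfolding S'_def by blast
qed

lemma ex_bounded_subset_sum_ge: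
  fixes f :: "'a \<Rightarrow> real"
  assumes "finite S" "\<And>x. x \<in> S \<Longrightarrow> 0 \<le> f x"
    and "0 \<le> r" "r \<le> 1" "r * real (card S) \<le> real k"
  shows "\<exists>T\<subseteq>S. card T \<le> k \<and> r * sum f S \<le> sum f T"
proof (cases "card S \<le> k")
  case True
  have "0 \<le> sum f S" using assms(2) by (simp add: sum_nonneg)
  then have "r * sum f S \<le> sum f S" using assms(3,4) by (simp add: mult_left_le_one_le)
  then show ?thesis using True by blast
next
  case False
  then obtain T where T: "T \<subseteq> S" "card T = k" and heavy: "real k * sum f S \<le> real (card S) * sum f T"
    using ex_heavy_subset[of S f k] assms(1,2) by auto
  have "0 \<le> sum f S" using assms(2) by (simp add: sum_nonneg)
  from mult_right_mono[OF assms(5) this]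
  have "real (card S) * (r * sum f S) \<le> real k * sum f S" by (simp add: ac_simps)
  also note heavy
  finally have "r * sum f S \<le> sum f T"
    using False by (simp add: mult_le_cancel_left_pos)
  then show ?thesis using T by auto
qed

lemma extend_to_bounded_allocation:
  assumes "finite C" "card C \<le> n * k"
    and "\<And>i. i < n \<Longrightarrow> T i \<subseteq> C" "\<And>i. i < n \<Longrightarrow> card (T i) \<le> k"
    and "\<And>i i'. i < n \<Longrightarrow> i' < n \<Longrightarrow> i \<noteq> i' \<Longrightarrow> T i \<inter> T i' = {}"
  shows "\<exists>B. is_allocation n C B \<and> (\<forall>i<n. T i \<subseteq> B i \<and> card (B i) \<le> k)"
  using assms(3-)
proof (induction "card (C - (\<Union>i<n. T i))" arbitrary: T)
  case 0
  have "C - (\<Union>i<n. T i) = {}" using "0.hyps" assms(1) by simp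
  then have "(\<Union>i<n. T i) = C" using "0.prems"(1) by blast
  then have "is_allocation n C T" using "0.prems"(1,3) unfolding is_allocation_def by blast
  then show ?case using "0.prems"(2) by (intro exI[of _ T]) simp
next
  case (Suc d)
  have fin: "\<And>i. i < n \<Longrightarrow> finite (T i)"
    using Suc.prems(1) assms(1) by (meson finite_subset)
  have "C - (\<Union>i<n. T i) \<noteq> {}" using Suc.hyps(2) by (intro notI) simp
  then obtain g where g: "g \<in> C" "g \<notin> (\<Union>i<n. T i)" by blast
  have "\<exists>i<n. card (T i) < k"
  proof (rule ccontr)
    assume "\<not> ?thesis"
    then have full: "\<And>i. i < n \<Longrightarrow> card (T i) = k"
      using Suc.prems(2) by (metis le_antisym not_less)
    have "card (\<Union>i<n. T i) = (\<Sum>i<n. card (T i))"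
      using fin Suc.prems(3) by (intro card_UN_disjoint) auto
    also have "\<dots> = n * k" using full by simp
    finally have "card (\<Union>i<n. T i) = n * k" .
    moreover have "card (\<Union>i<n. T i) < card C"
      using g Suc.prems(1) by (intro psubset_card_mono[OF assms(1)]) blast
    ultimately show False using assms(2) by simp
  qed
  then obtain i0 where i0: "i0 < n" "card (T i0) < k" by blast
  define T' where "T' = T(i0 := insert g (T i0))"
  have "C - (\<Union>i<n. T' i) = (C - (\<Union>i<n. T i)) - {g}"
    using i0(1) unfolding T'_def by auto
  then have "d = card (C - (\<Union>i<n. T' i))" using Suc.hyps(2) g assms(1) by simp
  moreover have "\<And>i. i < n \<Longrightarrow> T' i \<subseteq> C"
    using Suc.prems(1) g unfolding T'_def by simp
  moreover have "\<And>i. i < n \<Longrightarrow> card (T' i) \<le> k"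
    using Suc.prems(2) i0 fin unfolding T'_def by (simp add: card_insert_if)
  moreover have "\<And>i i'. i < n \<Longrightarrow> i' < n \<Longrightarrow> i \<noteq> i' \<Longrightarrow> T' i \<inter> T' i' = {}"
    using Suc.prems(3) g unfolding T'_def by auto
  ultimately have "\<exists>B. is_allocation n C B \<and> (\<forall>i<n. T' i \<subseteq> B i \<and> card (B i) \<le> k)"
    by (rule Suc.hyps(1))
  then obtain B where "is_allocation n C B" "\<forall>i<n. T' i \<subseteq> B i \<and> card (B i) \<le> k"
    by blast
  moreover have "T i \<subseteq> T' i" for i unfolding T'_def by auto
  ultimately show ?case by blast
qed

lemma ex_bounded_reallocation:
  fixes f :: "nat \<Rightarrow> 'a \<Rightarrow> real"
  assumes "finite C" "card C \<le> n * k"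
    and "0 \<le> r" "r \<le> 1" "r * real (card C) \<le> real k"
    and "\<And>i g. i < n \<Longrightarrow> g \<in> C \<Longrightarrow> 0 \<le> f i g"
    and "\<And>i i'. i < n \<Longrightarrow> i' < n \<Longrightarrow> i \<noteq> i' \<Longrightarrow> A i \<inter> A i' = {}"
  shows "\<exists>B. is_allocation n C B \<and>
           (\<forall>i<n. card (B i) \<le> k \<and> r * sum (f i) (A i \<inter> C) \<le> sum (f i) (B i))"
proof -
  have "\<exists>T\<subseteq>A i \<inter> C. card T \<le> k \<and> r * sum (f i) (A i \<inter> C) \<le> sum (f i) T" if "i < n" for i
  proof (rule ex_bounded_subset_sum_ge)
    have "card (A i \<inter> C) \<le> card C" using assms(1) by (simp add: card_mono)
    then show "r * real (card (A i \<inter> C)) \<le> real k"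
      using assms(3,5) by (meson mult_left_mono of_nat_le_iff order_trans)
  qed (use assms(1,3,4,6) that in auto)
  then obtain T where T: "\<And>i. i < n \<Longrightarrow> T i \<subseteq> A i \<inter> C \<and> card (T i) \<le> k \<and>
                                   r * sum (f i) (A i \<inter> C) \<le> sum (f i) (T i)"
    by metis
  obtain B where B: "is_allocation n C B" "\<forall>i<n. T i \<subseteq> B i \<and> card (B i) \<le> k"
    using extend_to_bounded_allocation[OF assms(1,2), of T] T assms(7) by blast
  have "sum (f i) (T i) \<le> sum (f i) (B i)" if "i < n" for i
  proof (rule sum_mono2)
    have "B i \<subseteq> C" using B(1) that unfolding is_allocation_def by blast
    then show "finite (B i)" using assms(1) finite_subset by blast
    show "T i \<subseteq> B i" using B(2) that by blast
    show "0 \<le> f i g" if "g \<in> B i - T i" for g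
      using \<open>B i \<subseteq> C\<close> assms(6) \<open>i < n\<close> that by blast
  qed
  then have "\<forall>i<n. card (B i) \<le> k \<and> r * sum (f i) (A i \<inter> C) \<le> sum (f i) (B i)"
    using B(2) T by (blast intro: order_trans)
  then show ?thesis using B(1) by blast
qed

lemma valid_instance_categories_allocation:
  "valid_instance n h M C u \<Longrightarrow> is_allocation h M C"
  unfolding valid_instance_def is_allocation_def by blast

lemma sum_split_allocation:
  assumes "is_allocation h M C" "finite M" "S \<subseteq> M"
  shows "sum f S = (\<Sum>j<h. sum f (S \<inter> C j))"
proof -
  have "S = (\<Union>j<h. S \<inter> C j)" using assms(1,3) unfolding is_allocation_def by blast
  then have "sum f S = sum f (\<Union>j<h. S \<inter> C j)" by simp
  also have "\<dots> = (\<Sum>j<h. sum f (S \<inter> C j))"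
  proof (rule sum.UNION_disjoint)
    show "\<forall>j\<in>{..<h}. finite (S \<inter> C j)"
      using assms(2,3) finite_subset by blast
    show "\<forall>j\<in>{..<h}. \<forall>j'\<in>{..<h}. j \<noteq> j' \<longrightarrow> S \<inter> C j \<inter> (S \<inter> C j') = {}"
      using assms(1) unfolding is_allocation_def by blast
  qed simp
  finally show ?thesis .
qed

lemma usw_split_categories:
  assumes "valid_instance n h M C u" "is_allocation n M A"
  shows "usw n u A = (\<Sum>i<n. \<Sum>j<h. sum (u i) (A i \<inter> C j))"
  unfolding usw_def util_def
proof (rule sum.cong)
  show "sum (u i) (A i) = (\<Sum>j<h. sum (u i) (A i \<inter> C j))" if "i \<in> {..<n}" for i
  proof (rule sum_split_allocation)
    show "is_allocation h M C" using assms(1) by (rule valid_instance_categories_allocation)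
    show "finite M" using assms(1) unfolding valid_instance_def by blast
    show "A i \<subseteq> M" using assms(2) that unfolding is_allocation_def by blast
  qed
qed simp

lemma is_allocation_Union:
  assumes "is_allocation h M C" "\<And>j. j < h \<Longrightarrow> is_allocation n (C j) (B j)"
  shows "is_allocation n M (\<lambda>i. \<Union>j<h. B j i)"
    and "\<And>i j. i < n \<Longrightarrow> j < h \<Longrightarrow> (\<Union>j'<h. B j' i) \<inter> C j = B j i"
proof -
  have C: "\<And>j j'. j < h \<Longrightarrow> j' < h \<Longrightarrow> j \<noteq> j' \<Longrightarrow> C j \<inter> C j' = {}"
    "\<And>j. j < h \<Longrightarrow> C j \<subseteq> M" "(\<Union>j<h. C j) = M"
    using assms(1) unfolding is_allocation_def by auto
  have B: "\<And>j i. j < h \<Longrightarrow> i < n \<Longrightarrow> B j i \<subseteq> C j"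
    "\<And>j i i'. j < h \<Longrightarrow> i < n \<Longrightarrow> i' < n \<Longrightarrow> i \<noteq> i' \<Longrightarrow> B j i \<inter> B j i' = {}"
    "\<And>j. j < h \<Longrightarrow> (\<Union>i<n. B j i) = C j"
    using assms(2) unfolding is_allocation_def by auto
  have in_B: "j' = j \<and> x \<in> B j i"
    if "x \<in> B j' i" "x \<in> C j" "i < n" "j < h" "j' < h" for x i j j'
    using B(1) C(1) that by blast
  show "(\<Union>j'<h. B j' i) \<inter> C j = B j i" if "i < n" "j < h" for i j
    using in_B[OF _ _ that] B(1)[OF that(2,1)] that(2) by blast
  have "(\<Union>i<n. \<Union>j<h. B j i) = (\<Union>j<h. \<Union>i<n. B j i)" by blast
  also have "\<dots> = M" using B(3) C(3) by simp
  moreover have "(\<Union>j<h. B j i) \<inter> (\<Union>j<h. B j i') = {}" if "i < n" "i' < n" "i \<noteq> i'" for i i'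
    using in_B B(1,2) that by blast
  moreover have "(\<Union>j<h. B j i) \<subseteq> M" if "i < n" for i
    using B(1) C(2) that by blast
  ultimately show "is_allocation n M (\<lambda>i. \<Union>j<h. B j i)"
    unfolding is_allocation_def by blast
qed

lemma ex_cardinal_allocation_usw_ge:
  assumes inst: "valid_instance n h M C u" and A: "is_allocation n M A"
    and "0 \<le> r" "r \<le> 1"
    and "\<And>j. j < h \<Longrightarrow> r * real (card (C j)) \<le> real (k j)"
    and "\<And>j. j < h \<Longrightarrow> card (C j) \<le> n * k j"
  shows "\<exists>B. is_allocation n M B \<and> is_cardinal n h C k B \<and> r * usw n u A \<le> usw n u B"
proof -
  have cats: "is_allocation h M C" using inst by (rule valid_instance_categories_allocation)
  have "finite M" and u_nonneg: "\<And>i g. i < n \<Longrightarrow> g \<in> M \<Longrightarrow> 0 \<le> u i g"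
    using inst unfolding valid_instance_def by auto
  have C_sub: "\<And>j. j < h \<Longrightarrow> C j \<subseteq> M"
    using cats unfolding is_allocation_def by blast
  have "\<exists>Bj. is_allocation n (C j) Bj \<and>
          (\<forall>i<n. card (Bj i) \<le> k j \<and> r * sum (u i) (A i \<inter> C j) \<le> sum (u i) (Bj i))"
    if "j < h" for j
  proof (rule ex_bounded_reallocation)
    show "finite (C j)" using C_sub that \<open>finite M\<close> finite_subset by blast
    show "\<And>i g. i < n \<Longrightarrow> g \<in> C j \<Longrightarrow> 0 \<le> u i g" using u_nonneg C_sub that by blast
    show "\<And>i i'. i < n \<Longrightarrow> i' < n \<Longrightarrow> i \<noteq> i' \<Longrightarrow> A i \<inter> A i' = {}"
      using A unfolding is_allocation_def by blast
  qed (use assms(3-) that in auto)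
  then obtain BB where BB_alloc: "\<And>j. j < h \<Longrightarrow> is_allocation n (C j) (BB j)"
    and BB: "\<And>j i. j < h \<Longrightarrow> i < n \<Longrightarrow>
                card (BB j i) \<le> k j \<and> r * sum (u i) (A i \<inter> C j) \<le> sum (u i) (BB j i)"
    by metis
  define B where "B i = (\<Union>j<h. BB j i)" for i
  have B_alloc: "is_allocation n M B"
    unfolding B_def using is_allocation_Union(1)[OF cats BB_alloc] .
  have B_cat: "\<And>i j. i < n \<Longrightarrow> j < h \<Longrightarrow> B i \<inter> C j = BB j i"
    unfolding B_def using is_allocation_Union(2)[OF cats BB_alloc] .
  have "is_cardinal n h C k B"
    unfolding is_cardinal_def using B_cat BB by simp
  moreover have "r * usw n u A \<le> usw n u B"
  proof -
    have "r * usw n u A = (\<Sum>i<n. \<Sum>j<h. r * sum (u i) (A i \<inter> C j))"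
      using usw_split_categories[OF inst A] by (simp add: sum_distrib_left)
    also have "\<dots> \<le> (\<Sum>i<n. \<Sum>j<h. sum (u i) (BB j i))"
      using BB by (intro sum_mono) auto
    also have "\<dots> = usw n u B"
      using usw_split_categories[OF inst B_alloc] B_cat by simp
    finally show ?thesis .
  qed
  ultimately show ?thesis using B_alloc by blast
qed

lemma usw_bounds:
  assumes "valid_instance n h M C u" "is_allocation n M A"
  shows "0 \<le> usw n u A" and "usw n u A \<le> real n"
proof -
  have bounds: "0 \<le> util u i (A i) \<and> util u i (A i) \<le> 1" if "i < n" for i
  proof -
    have "finite M" and nonneg: "\<And>g. g \<in> M \<Longrightarrow> 0 \<le> u i g" and "sum (u i) M = 1"
      and "A i \<subseteq> M"
      using assms that unfolding valid_instance_def is_allocation_def by auto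
    moreover from this have "sum (u i) (A i) \<le> sum (u i) M" by (intro sum_mono2) auto
    moreover have "0 \<le> sum (u i) (A i)" using nonneg \<open>A i \<subseteq> M\<close> by (intro sum_nonneg) auto
    ultimately show ?thesis unfolding util_def by simp
  qed
  show "0 \<le> usw n u A" unfolding usw_def using bounds by (auto intro: sum_nonneg)
  have "usw n u A \<le> (\<Sum>i<n. 1)" unfolding usw_def using bounds by (intro sum_mono) auto
  then show "usw n u A \<le> real n" by simp
qed

lemma is_allocation_to_first_agent:
  "0 < n \<Longrightarrow> is_allocation n M (\<lambda>i. if i = 0 then M else {})"
  unfolding is_allocation_def by auto

lemma usw_le_opt_usw:
  assumes "valid_instance n h M C u" "is_allocation n M A"
  shows "usw n u A \<le> opt_usw n M u"
  unfolding opt_usw_def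
  by (rule cSup_upper) (use assms usw_bounds(2) in \<open>auto intro!: bdd_aboveI\<close>)

lemma opt_usw_le:
  assumes "valid_instance n h M C u" "\<And>A. is_allocation n M A \<Longrightarrow> usw n u A \<le> x"
  shows "opt_usw n M u \<le> x"
proof -
  have "0 < n" using assms(1) unfolding valid_instance_def by blast
  then show ?thesis
    unfolding opt_usw_def using assms(2) is_allocation_to_first_agent
    by (intro cSup_least) blast+
qed

lemma usw_le_max_cardinal_usw:
  assumes "valid_instance n h M C u" "is_allocation n M A" "is_cardinal n h C k A"
  shows "usw n u A \<le> max_cardinal_usw n h M C k u"
  unfolding max_cardinal_usw_def
  by (rule cSup_upper) (use assms usw_bounds(2) in \<open>auto intro!: bdd_aboveI\<close>)

lemma max_cardinal_usw_le:
  assumes "is_allocation n M B" "is_cardinal n h C k B"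
    and "\<And>A. is_allocation n M A \<Longrightarrow> is_cardinal n h C k A \<Longrightarrow> usw n u A \<le> x"
  shows "max_cardinal_usw n h M C k u \<le> x"
  unfolding max_cardinal_usw_def using assms by (intro cSup_least) blast+

lemma opt_usw_scaled_le_max_cardinal_usw:
  assumes inst: "valid_instance n h M C u" and "0 < r" "r \<le> 1"
    and "\<And>j. j < h \<Longrightarrow> r * real (card (C j)) \<le> real (k j)"
    and "\<And>j. j < h \<Longrightarrow> card (C j) \<le> n * k j"
  shows "r * opt_usw n M u \<le> max_cardinal_usw n h M C k u"
proof -
  have "usw n u A \<le> max_cardinal_usw n h M C k u / r" if A: "is_allocation n M A" for A
  proof -
    obtain B where "is_allocation n M B" "is_cardinal n h C k B" "r * usw n u A \<le> usw n u B"
      using ex_cardinal_allocation_usw_ge[OF inst A less_imp_le[OF assms(2)] assms(3-5)] by blast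
    then have "r * usw n u A \<le> max_cardinal_usw n h M C k u"
      using usw_le_max_cardinal_usw[OF inst] by fastforce
    then show ?thesis using \<open>0 < r\<close> by (simp add: le_divide_eq mult.commute)
  qed
  then have "opt_usw n M u \<le> max_cardinal_usw n h M C k u / r"
    by (rule opt_usw_le[OF inst])
  then show ?thesis using \<open>0 < r\<close> by (simp add: le_divide_eq mult.commute)
qed

lemma opt_usw_div_max_cardinal_usw_le:
  assumes inst: "valid_instance n h M C u" and "0 < h"
    and fair: "\<And>j. j < h \<Longrightarrow> real (card (C j)) / real n \<le> real (k j)"
    and sorted: "\<And>j j'. j < h \<Longrightarrow> j' < h \<Longrightarrow> j \<le> j' \<Longrightarrow>
                   real (k j) / real (card (C j)) \<le> real (k j') / real (card (C j'))"
    and "k 0 \<le> card (C 0)"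
  shows "opt_usw n M u / max_cardinal_usw n h M C k u \<le> real (card (C 0)) / real (k 0)"
proof -
  have "0 < n" and card_pos: "\<And>j. j < h \<Longrightarrow> 0 < card (C j)"
    using inst unfolding valid_instance_def by (auto intro: finite_subset)
  have fits: "card (C j) \<le> n * k j" if "j < h" for j
  proof -
    have "real (card (C j)) \<le> real (n * k j)"
      using fair[OF that] \<open>0 < n\<close> by (simp add: divide_le_eq mult.commute)
    then show ?thesis by linarith
  qed
  have "0 < k 0" using fits[OF \<open>0 < h\<close>] card_pos[OF \<open>0 < h\<close>] by (cases "k 0") auto
  define r where "r = real (k 0) / real (card (C 0))"
  have "0 < r" "r \<le> 1"
    using \<open>0 < k 0\<close> card_pos[OF \<open>0 < h\<close>] \<open>k 0 \<le> card (C 0)\<close> unfolding r_def by auto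
  moreover have "r * real (card (C j)) \<le> real (k j)" if "j < h" for j
    using sorted[OF \<open>0 < h\<close> that] card_pos[OF that] unfolding r_def by (simp add: le_divide_eq)
  ultimately have scaled: "r * opt_usw n M u \<le> max_cardinal_usw n h M C k u"
    using opt_usw_scaled_le_max_cardinal_usw[OF inst] fits by blast
  have "0 \<le> opt_usw n M u"
    using usw_bounds(1)[OF inst] usw_le_opt_usw[OF inst] is_allocation_to_first_agent[OF \<open>0 < n\<close>]
    by (meson order_trans)
  then have "0 \<le> max_cardinal_usw n h M C k u"
    using scaled \<open>0 < r\<close> by (meson less_imp_le mult_nonneg_nonneg order_trans)
  then have "opt_usw n M u / max_cardinal_usw n h M C k u \<le> 1 / r"
    using scaled \<open>0 < r\<close> by (cases "max_cardinal_usw n h M C k u = 0")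
      (auto simp: divide_simps mult.commute)
  then show ?thesis unfolding r_def by simp
qed

definition block :: "nat \<Rightarrow> nat \<Rightarrow> nat set" where
  "block q j = {j * q..<j * q + q}"

definition block_utility :: "nat \<Rightarrow> nat \<Rightarrow> nat \<Rightarrow> real" where
  "block_utility q i g = (if g \<in> block q i then 1 / real q else 0)"

lemma mem_block_iff:
  assumes "0 < q"
  shows "g \<in> block q j \<longleftrightarrow> g div q = j"
proof
  assume "g \<in> block q j"
  then show "g div q = j" unfolding block_def by (intro div_nat_eqI) (auto simp: mult.commute)
next
  assume "g div q = j"
  then show "g \<in> block q j"
    using div_times_less_eq_dividend[of g q] dividend_less_div_times[OF assms, of g]
    unfolding block_def by auto
qed

lemma card_block: "card (block q j) = q"
  unfolding block_def by simp

lemma util_block_utility: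
  "finite S \<Longrightarrow> util (block_utility q) i S = real (card (S \<inter> block q i)) / real q"
  unfolding util_def block_utility_def by (simp add: sum.If_cases)

lemma valid_instance_blocks:
  assumes "0 < n" "0 < q"
  shows "valid_instance n n {..<n * q} (block q) (block_utility q)"
  unfolding valid_instance_def
proof (intro conjI allI impI)
  show blocks: "(\<Union>j<n. block q j) = {..<n * q}"
    using assms(2) by (auto simp: mem_block_iff div_less_iff_less_mult)
  show "block q j \<noteq> {}" for j using card_block[of q j] assms(2) by auto
  show "block q j \<subseteq> {..<n * q}" if "j < n" for j using blocks that by blast
  show "block q j \<inter> block q j' = {}" if "j \<noteq> j'" for j j'
    using that assms(2) by (auto simp: mem_block_iff)
  show "\<forall>g\<in>{..<n * q}. 0 \<le> block_utility q i g" for i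
    unfolding block_utility_def by simp
  show "(\<Sum>g<n * q. block_utility q i g) = 1" if "i < n" for i
  proof -
    have "{..<n * q} \<inter> block q i = block q i" using blocks that by blast
    then show ?thesis
      using util_block_utility[of "{..<n * q}" q i] card_block[of q i] assms(2)
      unfolding util_def by simp
  qed
qed (use assms in auto)

lemma usw_cardinal_blocks_le:
  assumes "is_allocation n {..<n * q} A" "is_cardinal n n (block q) (\<lambda>_. k) A"
  shows "usw n (block_utility q) A \<le> real k / real q * real n"
proof -
  have "util (block_utility q) i (A i) \<le> real k / real q" if "i < n" for i
  proof -
    have "finite (A i)"
      using assms(1) that unfolding is_allocation_def by (meson finite_lessThan finite_subset)
    moreover have "card (A i \<inter> block q i) \<le> k"
      using assms(2) that unfolding is_cardinal_def by blast
    ultimately show ?thesis using util_block_utility by (simp add: divide_right_mono)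
  qed
  then have "usw n (block_utility q) A \<le> (\<Sum>i<n. real k / real q)"
    unfolding usw_def by (intro sum_mono) auto
  then show ?thesis by (simp add: mult.commute)
qed

lemma opt_usw_div_max_cardinal_usw_blocks:
  assumes "0 < n" "0 < k" "k \<le> q" "q \<le> k * n"
  shows "opt_usw n {..<n * q} (block_utility q) /
           max_cardinal_usw n n {..<n * q} (block q) (\<lambda>_. k) (block_utility q) = real q / real k"
proof -
  have "0 < q" using assms(2,3) by simp
  have inst: "valid_instance n n {..<n * q} (block q) (block_utility q)"
    using valid_instance_blocks[OF assms(1) \<open>0 < q\<close>] .
  have alloc: "is_allocation n {..<n * q} (block q)"
    using valid_instance_categories_allocation[OF inst] .
  have "usw n (block_utility q) (block q) = real n"
    unfolding usw_def using util_block_utility[of "block q _" q] card_block \<open>0 < q\<close>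
    by (simp add: block_def)
  then have opt: "opt_usw n {..<n * q} (block_utility q) = real n"
    using opt_usw_le[OF inst usw_bounds(2)[OF inst]] usw_le_opt_usw[OF inst alloc] by linarith
  define r where "r = real k / real q"
  have "0 < r" "r \<le> 1" "\<And>j. r * real (card (block q j)) \<le> real k"
    "\<And>j. card (block q j) \<le> n * k"
    using assms \<open>0 < q\<close> unfolding r_def by (auto simp: card_block mult.commute)
  note r = this
  have "r * real n \<le> max_cardinal_usw n n {..<n * q} (block q) (\<lambda>_. k) (block_utility q)"
    using opt_usw_scaled_le_max_cardinal_usw[OF inst r] opt by simp
  moreover have "max_cardinal_usw n n {..<n * q} (block q) (\<lambda>_. k) (block_utility q) \<le> r * real n"
  proof -
    obtain B where "is_allocation n {..<n * q} B" "is_cardinal n n (block q) (\<lambda>_. k) B"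
      using ex_cardinal_allocation_usw_ge[OF inst alloc less_imp_le[OF r(1)] r(2-)] by blast
    then show ?thesis
      unfolding r_def by (rule max_cardinal_usw_le) (rule usw_cardinal_blocks_le)
  qed
  ultimately show ?thesis
    using opt assms(1) \<open>0 < q\<close> \<open>0 < k\<close> unfolding r_def by simp
qed

theorem theorem4:
  shows "(\<forall>(n::nat) h (M::'g set) C u (k::nat \<Rightarrow> nat).
            valid_instance n h M C u \<and> 0 < h \<and>
            (\<forall>j<h. real (card (C j)) / real n \<le> real (k j)) \<and>
            (\<forall>j<h. \<forall>j'<h. j \<le> j' \<longrightarrow>
                real (k j) / real (card (C j)) \<le> real (k j') / real (card (C j'))) \<and>
            k 0 \<le> card (C 0)
          \<longrightarrow> opt_usw n M u / max_cardinal_usw n h M C k u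
                \<le> real (card (C 0)) / real (k 0))
       \<and>
       (\<forall>(n::nat) (k::nat) (q::nat).
            0 < n \<and> 0 < k \<and> 0 < q \<and> k dvd q \<and> q \<le> k * n \<longrightarrow>
            (\<exists>(M::nat set) C u.
               valid_instance n n M C u \<and> (\<forall>j<n. card (C j) = q) \<and>
               opt_usw n M u / max_cardinal_usw n n M C (\<lambda>_. k) u = real q / real k))"
proof (intro conjI allI impI; elim conjE)
  fix n h k and M :: "'g set" and C u
  assume "valid_instance n h M C u" "0 < h"
    "\<forall>j<h. real (card (C j)) / real n \<le> real (k j)"
    "\<forall>j<h. \<forall>j'<h. j \<le> j' \<longrightarrow> real (k j) / real (card (C j)) \<le> real (k j') / real (card (C j'))"
    "k 0 \<le> card (C 0)"
  then show "opt_usw n M u / max_cardinal_usw n h M C k u \<le> real (card (C 0)) / real (k 0)"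
    by (intro opt_usw_div_max_cardinal_usw_le) auto
next
  fix n k q :: nat
  assume "0 < n" "0 < k" "0 < q" "k dvd q" "q \<le> k * n"
  moreover from this have "k \<le> q" by (simp add: dvd_imp_le)
  ultimately show "\<exists>(M::nat set) C u. valid_instance n n M C u \<and> (\<forall>j<n. card (C j) = q) \<and>
                     opt_usw n M u / max_cardinal_usw n n M C (\<lambda>_. k) u = real q / real k"
    using valid_instance_blocks card_block opt_usw_div_max_cardinal_usw_blocks
    by (intro exI[of _ "{..<n * q}"] exI[of _ "block q"] exI[of _ "block_utility q"]) simp
qed

end
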